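(* Let $m,n\ge1$ and $k$ be integers with $|k|_m=n$, and let $G=\langle a,b\mid a^m=1=b^n,\ b^{-1}ab=a^k\rangle$. Let $s$ be an odd prime with $\gcd(s,m)=1$, $\zeta$ a primitive $m$-th root of unity in $\overline{\mathbb{F}}_s$, and $q$ a power of $s$. Assume that the automorphism $\tau(x)=x^q$ of $\overline{\mathbb{F}}_s$ acts transitively on $\mathscr{P}=\{\zeta,\zeta^k,\dots,\zeta^{k^{n-1}}\}$. Then the induced representation $\rho^G$ is realizable over $\mathbb{F}_q$.
   Context: $|k|_m$ denotes the multiplicative order of $k$ modulo $m$. $\rho:\langle a\rangle\to\overline{\mathbb{F}}_s^*$ is given by $\rho(a)=\zeta$ and $\rho^G$ is the induced representation of $G$; concretely it acts on a space with basis $e_0,\dots,e_{n-1}$ by $ae_i=\zeta^{k^i}e_i$, $be_i=e_{i+1}$ (indices modulo $n$). A representation of $G$ over $\overline{\mathbb{F}}_s$ is realizable over a subfield $\mathbb{F}_q$ if it is equivalent (over $\overline{\mathbb{F}}_s$) to a matrix representation all of whose matrices have entries in $\mathbb{F}_q$. *)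

theory Defs
  imports "HOL-Number_Theory.Number_Theory" "HOL-Computational_Algebra.Polynomial" "Jordan_Normal_Form.Matrix"
begin

(* multiplicative order |k|_m of an integer k modulo m (0 if not coprime) *)
definition mult_ord :: "nat \<Rightarrow> int \<Rightarrow> nat" where
  "mult_ord m k = (if coprime (int m) k then (LEAST d. d > 0 \<and> [k ^ d = 1] (mod int m)) else 0)"

definition prim_root :: "nat \<Rightarrow> 'a::field \<Rightarrow> bool" where
  "prim_root m z \<longleftrightarrow> z ^ m = 1 \<and> (\<forall>j. 0 < j \<and> j < m \<longrightarrow> z ^ j \<noteq> 1)"

(* K is an algebraic closure of F_s: algebraically closed and algebraic over the prime field *)
definition alg_closed :: "'a::field itself \<Rightarrow> bool" where
  "alg_closed _ \<longleftrightarrow> (\<forall>p :: 'a poly. degree p > 0 \<longrightarrow> (\<exists>x. poly p x = 0))"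

definition algebraic_over_prime :: "'a::field itself \<Rightarrow> bool" where
  "algebraic_over_prime _ \<longleftrightarrow>
     (\<forall>x :: 'a. \<exists>p :: int poly. poly (map_poly of_int p) x = 0 \<and> map_poly (of_int :: int \<Rightarrow> 'a) p \<noteq> 0)"

(* zeta^(k^i) for an integer k (exponent reduced mod m, zeta^m = 1) *)
definition zpow :: "nat \<Rightarrow> 'a::field \<Rightarrow> int \<Rightarrow> 'a" where
  "zpow m z e = z ^ nat (e mod int m)"

(* matrices of the induced representation rho^G on basis e_0..e_{n-1}:
   a e_i = zeta^(k^i) e_i,  b e_i = e_{i+1 mod n} *)
definition rep_a :: "nat \<Rightarrow> nat \<Rightarrow> int \<Rightarrow> 'a::field \<Rightarrow> 'a mat" where
  "rep_a m n k z = mat n n (\<lambda>(i,j). if i = j then zpow m z (k ^ j) else 0)"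

definition rep_b :: "nat \<Rightarrow> 'a::field mat" where
  "rep_b n = mat n n (\<lambda>(i,j). if i = (j + 1) mod n then 1 else 0)"

(* entries in the subfield F_q = {x. x^q = x} of the algebraic closure *)
definition entries_in_Fq :: "nat \<Rightarrow> 'a::field mat \<Rightarrow> bool" where
  "entries_in_Fq q M \<longleftrightarrow> (\<forall>i < dim_row M. \<forall>j < dim_col M. (M $$ (i,j)) ^ q = M $$ (i,j))"

end

theory Submission
  imports Defs "Jordan_Normal_Form.Determinant"
begin

(* Put x_i = zeta^(k^i) for i < n; these are the pairwise distinct diagonal entries of
   A = rho^G(a), while B = rho^G(b) is a cyclic shift of the basis.  The Frobenius map
   h(y) = y^q is a ring endomorphism, and since it maps the orbit {x_0, ..., x_(n-1)}
   into itself, it acts there as a cyclic shift h(x_i) = x_((i+r) mod n).  Let S be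
   the matrix of this shift and W the Vandermonde matrix (x_i^j).  Then h(W) = S W,
   h(A) S = S A, and h(B) S = B S = S B, so every X = A^i B^j satisfies the twisted
   commutation h(X) S = S X.  Consequently W^-1 X W is fixed by h entrywise, i.e. has
   entries in F_q, and conjugation by W realizes rho^G over F_q. *)

section \<open>The Frobenius endomorphism\<close>

(* In characteristic p, x |-> x^(p^e) is a ring homomorphism (freshman's dream). *)
lemma frobenius_semiring_hom:
  assumes "prime CHAR('a::comm_semiring_1)"
  shows "semiring_hom (\<lambda>x::'a. x ^ (CHAR('a) ^ e))"
proof
  show "(x + y) ^ (CHAR('a) ^ e) = x ^ (CHAR('a) ^ e) + y ^ (CHAR('a) ^ e)" for x y :: 'a
    by (rule freshmans_dream'[OF assms refl])
  show "(0::'a) ^ (CHAR('a) ^ e) = 0"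
    using prime_gt_0_nat[OF assms] by (simp add: power_0_left)
qed (simp_all add: power_mult_distrib)

lemma entries_in_Fq_iff_fixed:
  "entries_in_Fq q M \<longleftrightarrow> map_mat (\<lambda>x. x ^ q) M = M"
proof
  assume fixed: "map_mat (\<lambda>x. x ^ q) M = M"
  show "entries_in_Fq q M"
    unfolding entries_in_Fq_def by (metis fixed index_map_mat(1))
qed (auto simp: entries_in_Fq_def intro!: eq_matI)

lemma zpow_cong: "[a = b] (mod int m) \<Longrightarrow> zpow m z a = zpow m z b"
  by (simp add: zpow_def cong_def)

lemma zpow_of_nat:
  assumes "z ^ m = 1" "m > 0"
  shows "zpow m z (int a) = z ^ a"
proof -
  have "z ^ a = z ^ (m * (a div m) + a mod m)"
    by simp
  also have "\<dots> = (z ^ m) ^ (a div m) * z ^ (a mod m)"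
    by (simp only: power_add power_mult)
  finally show ?thesis
    using assms by (simp add: zpow_def zmod_int[symmetric])
qed

lemma zpow_power:
  assumes "z ^ m = 1" "m > 0"
  shows "zpow m z a ^ c = zpow m z (a * int c)"
proof -
  have "zpow m z a ^ c = z ^ (nat (a mod int m) * c)"
    by (simp add: zpow_def power_mult)
  also have "\<dots> = zpow m z (int (nat (a mod int m) * c))"
    by (rule zpow_of_nat[symmetric, OF assms])
  also have "\<dots> = zpow m z (a * int c)"
    using assms(2) by (intro zpow_cong) (simp add: cong_def mod_mult_left_eq)
  finally show ?thesis .
qed

lemma prim_root_power_inj:
  fixes z :: "'a::field"
  assumes "prim_root m z" "u < m" "v < m" "z ^ u = z ^ v"
  shows "u = v"
proof -
  have not_one: "z ^ j \<noteq> 1" if "0 < j" "j < m" for j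
    using assms(1) that by (auto simp: prim_root_def)
  have "z \<noteq> 0"
    using assms(1,2) by (auto simp: prim_root_def power_0_left)
  have "False" if "a < b" "b < m" "z ^ a = z ^ b" for a b
  proof -
    have "z ^ a * z ^ (b - a) = z ^ b"
      using that(1) by (simp flip: power_add)
    then have "z ^ a * z ^ (b - a) = z ^ a * 1"
      using that(3) by simp
    then show False
      using \<open>z \<noteq> 0\<close> not_one[of "b - a"] that by simp
  qed
  then show ?thesis
    using assms(2-4) by (metis linorder_neqE_nat)
qed

lemma zpow_eq_iff:
  fixes z :: "'a::field"
  assumes "prim_root m z" "m > 0"
  shows "zpow m z a = zpow m z b \<longleftrightarrow> [a = b] (mod int m)"
proof
  assume "zpow m z a = zpow m z b"
  then have "nat (a mod int m) = nat (b mod int m)"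
    using assms by (intro prim_root_power_inj[OF assms(1)]) (auto simp: zpow_def nat_less_iff)
  then show "[a = b] (mod int m)"
    using assms(2) by (subst (asm) eq_nat_nat_iff) (auto simp: cong_def)
qed (rule zpow_cong)

(* |k|_m = n > 0 is the least positive exponent with k^n = 1 modulo m; such exponents
   exist by Euler's theorem, since |k|_m > 0 forces k to be a unit modulo m. *)
lemma mult_ord_props:
  assumes "m > 0" "mult_ord m k = n" "n > 0"
  shows "coprime (int m) k" and "[k ^ n = 1] (mod int m)"
    and "\<And>d. 0 < d \<Longrightarrow> [k ^ d = 1] (mod int m) \<Longrightarrow> n \<le> d"
proof -
  show cop: "coprime (int m) k"
    using assms(2,3) by (auto simp: mult_ord_def split: if_splits)
  then have n_Least: "n = (LEAST d. d > 0 \<and> [k ^ d = 1] (mod int m))"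
    using assms(2) by (simp add: mult_ord_def)
  have "\<exists>d. d > 0 \<and> [k ^ d = 1] (mod int m)"
  proof (cases "m = 1")
    case False
    then have "[k ^ totient m = 1] (mod int m)"
      using residues.euler_theorem[of "int m" k] assms(1) cop
      by (simp add: residues_def coprime_commute)
    then show ?thesis
      using assms(1) by (intro exI[of _ "totient m"]) simp
  qed (auto intro: exI[of _ 1] simp: cong_def)
  then show "[k ^ n = 1] (mod int m)"
    unfolding n_Least by (rule LeastI2_ex) simp
  show "n \<le> d" if "0 < d" "[k ^ d = 1] (mod int m)" for d
    unfolding n_Least using that by (simp add: Least_le)
qed

lemma power_mod_mult_ord:
  assumes "m > 0" "mult_ord m k = n" "n > 0"
  shows "[k ^ t = k ^ (t mod n)] (mod int m)"
proof -
  have "k ^ t = k ^ (t mod n + n * (t div n))"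
    by simp
  also have "\<dots> = k ^ (t mod n) * (k ^ n) ^ (t div n)"
    by (simp only: power_add power_mult)
  also have "[\<dots> = k ^ (t mod n) * 1 ^ (t div n)] (mod int m)"
    by (intro cong_mult cong_pow mult_ord_props(2)[OF assms] cong_refl)
  finally show ?thesis by simp
qed

lemma power_inj_mult_ord:
  assumes "m > 0" "mult_ord m k = n" "n > 0"
    and "i < n" "j < n" "[k ^ i = k ^ j] (mod int m)"
  shows "i = j"
proof -
  have "False" if "a < b" "b < n" "[k ^ a = k ^ b] (mod int m)" for a b
  proof -
    have "[k ^ a * 1 = k ^ a * k ^ (b - a)] (mod int m)"
      using that by (simp flip: power_add)
    moreover have "coprime (k ^ a) (int m)"
      using mult_ord_props(1)[OF assms(1-3)] by (simp add: coprime_commute)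
    ultimately have "[1 = k ^ (b - a)] (mod int m)"
      using cong_mult_lcancel by blast
    then show False
      using mult_ord_props(3)[OF assms(1-3), of "b - a"] that cong_sym by fastforce
  qed
  then show ?thesis
    using assms(4-6) cong_sym by (cases i j rule: linorder_cases) blast+
qed

lemma orbit_inj:
  fixes z :: "'a::field"
  assumes "prim_root m z" "m > 0" "mult_ord m k = n" "n > 0"
  shows "inj_on (\<lambda>i. zpow m z (k ^ i)) {..<n}"
  using power_inj_mult_ord[OF assms(2-4)] by (auto intro!: inj_onI simp: zpow_eq_iff[OF assms(1,2)])

lemma orbit_power_shift:
  fixes z :: "'a::field"
  assumes "prim_root m z" "m > 0" "mult_ord m k = n" "n > 0"
    and "z ^ q = zpow m z (k ^ r)"
  shows "zpow m z (k ^ i) ^ q = zpow m z (k ^ ((i + r) mod n))"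
proof -
  have z1: "z ^ m = 1"
    using assms(1) by (simp add: prim_root_def)
  have "[int q = k ^ r] (mod int m)"
    using assms(5) zpow_of_nat[OF z1 assms(2)] zpow_eq_iff[OF assms(1,2)] by metis
  then have "[k ^ i * int q = k ^ (i + r)] (mod int m)"
    by (simp add: power_add cong_scalar_left)
  also have "[k ^ (i + r) = k ^ ((i + r) mod n)] (mod int m)"
    by (rule power_mod_mult_ord[OF assms(2-4)])
  finally show ?thesis
    by (simp add: zpow_power[OF z1 assms(2)] zpow_cong)
qed

lemma orbit_invariant_imp_shift:
  fixes z :: "'a::field"
  assumes "prim_root m z" "m > 0" "mult_ord m k = n" "n > 0"
    and "\<forall>x \<in> {zpow m z (k ^ i) | i. i < n}. x ^ q \<in> {zpow m z (k ^ i) | i. i < n}"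
  obtains r where "\<And>i. zpow m z (k ^ i) ^ q = zpow m z (k ^ ((i + r) mod n))"
proof -
  have "zpow m z (k ^ 0) = z"
    using zpow_of_nat[of z m 1] assms(1,2) by (simp add: prim_root_def)
  moreover have "zpow m z (k ^ 0) \<in> {zpow m z (k ^ i) | i. i < n}"
    using assms(4) by blast
  ultimately obtain r where "z ^ q = zpow m z (k ^ r)"
    using assms(5) by force
  then show ?thesis
    using that orbit_power_shift[OF assms(1-4)] by blast
qed

definition shift_mat :: "nat \<Rightarrow> nat \<Rightarrow> 'a::semiring_1 mat" where
  "shift_mat n r = mat n n (\<lambda>(i,j). if j = (i + r) mod n then 1 else 0)"

lemma shift_mat_dims [simp]: "dim_row (shift_mat n r) = n" "dim_col (shift_mat n r) = n"
  by (simp_all add: shift_mat_def)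

lemma shift_mat_carrier [simp]: "shift_mat n r \<in> carrier_mat n n"
  by (simp add: carrier_matI)

lemma shift_mat_mult_index:
  assumes "M \<in> carrier_mat n nc" "i < n" "j < nc"
  shows "(shift_mat n r * M) $$ (i,j) = M $$ ((i + r) mod n, j)"
proof -
  have "(shift_mat n r * M) $$ (i,j) = (\<Sum>l\<in>{0..<n}. (if l = (i + r) mod n then 1 else 0) * M $$ (l,j))"
    using assms by (simp add: shift_mat_def scalar_prod_def)
  also have "\<dots> = (\<Sum>l\<in>{0..<n}. if l = (i + r) mod n then M $$ (l,j) else 0)"
    by (rule sum.cong) auto
  also have "\<dots> = M $$ ((i + r) mod n, j)"
    using assms by simp
  finally show ?thesis .
qed

lemma shift_mat_commute: "shift_mat n a * shift_mat n b = (shift_mat n b * shift_mat n a :: 'a::semiring_1 mat)"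
proof (rule eq_matI)
  fix i j assume "i < dim_row (shift_mat n b * shift_mat n a :: 'a mat)"
    "j < dim_col (shift_mat n b * shift_mat n a :: 'a mat)"
  then have ij: "i < n" "j < n" by auto
  have "((i + a) mod n + b) mod n = ((i + b) mod n + a) mod n"
    by (simp add: mod_add_right_eq add_ac)
  moreover have "(shift_mat n a * shift_mat n b :: 'a mat) $$ (i, j) = shift_mat n b $$ ((i + a) mod n, j)"
    and "(shift_mat n b * shift_mat n a :: 'a mat) $$ (i, j) = shift_mat n a $$ ((i + b) mod n, j)"
    using ij by (simp_all add: shift_mat_mult_index[of _ n n] del: index_mult_mat)
  ultimately show "(shift_mat n a * shift_mat n b :: 'a mat) $$ (i, j) = (shift_mat n b * shift_mat n a) $$ (i, j)"
    using ij by (simp add: shift_mat_def)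
qed auto

lemma rep_b_eq_shift_mat:
  assumes "n > 0"
  shows "rep_b n = shift_mat n (n - 1)"
proof (rule eq_matI)
  fix i j assume "i < dim_row (shift_mat n (n - 1) :: 'a mat)" "j < dim_col (shift_mat n (n - 1) :: 'a mat)"
  then have ij: "i < n" "j < n" by auto
  have "(j + 1) mod n = (if j + 1 = n then 0 else j + 1)"
    using ij by auto
  moreover have "(i + (n - 1)) mod n = (if i = 0 then n - 1 else i - 1)"
    using ij by (auto simp: mod_if)
  ultimately have "(i = (j + 1) mod n) = (j = (i + (n - 1)) mod n)"
    using ij by auto
  then show "rep_b n $$ (i, j) = (shift_mat n (n - 1) :: 'a mat) $$ (i, j)"
    using ij by (simp add: rep_b_def shift_mat_def)
qed (auto simp: rep_b_def)

definition vandermonde :: "nat \<Rightarrow> (nat \<Rightarrow> 'a::semiring_1) \<Rightarrow> 'a mat" where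
  "vandermonde n x = mat n n (\<lambda>(i,j). x i ^ j)"

lemma vandermonde_dims [simp]: "dim_row (vandermonde n x) = n" "dim_col (vandermonde n x) = n"
  by (simp_all add: vandermonde_def)

lemma vandermonde_carrier [simp]: "vandermonde n x \<in> carrier_mat n n"
  by (simp add: carrier_matI)

(* A kernel vector of the Vandermonde matrix is the coefficient vector of a polynomial
   of degree < n vanishing at the n distinct nodes, hence zero. *)
lemma vandermonde_det_nonzero:
  fixes x :: "nat \<Rightarrow> 'a::field"
  assumes "inj_on x {..<n}"
  shows "det (vandermonde n x) \<noteq> 0"
proof
  assume "det (vandermonde n x) = 0"
  then obtain v where v: "v \<in> carrier_vec n" "v \<noteq> 0\<^sub>v n" "vandermonde n x *\<^sub>v v = 0\<^sub>v n"
    using det_0_iff_vec_prod_zero_field[OF vandermonde_carrier] by auto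
  define p where "p = (\<Sum>j<n. monom (v $ j) j)"
  have coeff_p: "coeff p j = (if j < n then v $ j else 0)" for j
    by (simp add: p_def coeff_sum coeff_monom)
  have roots: "poly p (x i) = 0" if "i < n" for i
  proof -
    have "poly p (x i) = (vandermonde n x *\<^sub>v v) $ i"
      using that v(1) by (simp add: p_def poly_sum poly_monom vandermonde_def scalar_prod_def
          lessThan_atLeast0 mult.commute)
    then show ?thesis
      using v(3) that by simp
  qed
  obtain j where "j < n" "v $ j \<noteq> 0"
    using v(1,2) by (metis eq_vecI carrier_vecD index_zero_vec(1,2))
  then have "p \<noteq> 0"
    using coeff_p[of j] by auto
  have "degree p < n"
    using \<open>j < n\<close> by (intro le_less_trans[OF degree_le[of "n - 1"]]) (auto simp: coeff_p)
  have "n = card (x ` {..<n})"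
    using card_image[OF assms] by simp
  also have "\<dots> \<le> card {y. poly p y = 0}"
    using roots by (intro card_mono poly_roots_finite[OF \<open>p \<noteq> 0\<close>]) auto
  also have "\<dots> \<le> degree p"
    by (rule card_poly_roots_bound[OF \<open>p \<noteq> 0\<close>])
  finally show False
    using \<open>degree p < n\<close> by simp
qed

lemma vandermonde_invertible:
  fixes x :: "nat \<Rightarrow> 'a::field"
  assumes "inj_on x {..<n}"
  obtains P where "P \<in> carrier_mat n n" "P * vandermonde n x = 1\<^sub>m n" "vandermonde n x * P = 1\<^sub>m n"
  using det_non_zero_imp_unit[OF vandermonde_carrier vandermonde_det_nonzero[OF assms]]
  by (auto simp: Units_def ring_mat_def)

section \<open>Descent along a twisted commutation relation\<close>

definition twisted_comm :: "('a::semiring_1 \<Rightarrow> 'a) \<Rightarrow> 'a mat \<Rightarrow> 'a mat \<Rightarrow> bool" where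
  "twisted_comm h S X \<longleftrightarrow> map_mat h X * S = S * X"

lemma twisted_comm_mult:
  assumes "semiring_hom h" "S \<in> carrier_mat n n" "X \<in> carrier_mat n n" "Y \<in> carrier_mat n n"
    and "twisted_comm h S X" "twisted_comm h S Y"
  shows "twisted_comm h S (X * Y)"
proof -
  interpret semiring_hom h by fact
  have hX: "map_mat h X \<in> carrier_mat n n" and hY: "map_mat h Y \<in> carrier_mat n n"
    using assms(3,4) by auto
  have "map_mat h (X * Y) * S = map_mat h X * (map_mat h Y * S)"
    using assms(2-4) hX hY by (simp add: mat_hom_mult assoc_mult_mat[of _ n n _ n _ n])
  also have "\<dots> = (map_mat h X * S) * Y"
    using assms(2,4,6) hX by (simp add: twisted_comm_def assoc_mult_mat[of _ n n _ n _ n])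
  also have "\<dots> = S * (X * Y)"
    using assms(2-5) by (simp add: twisted_comm_def assoc_mult_mat[of _ n n _ n _ n])
  finally show ?thesis
    unfolding twisted_comm_def .
qed

lemma twisted_comm_pow:
  assumes "semiring_hom h" "S \<in> carrier_mat n n" "X \<in> carrier_mat n n" "twisted_comm h S X"
  shows "twisted_comm h S (X ^\<^sub>m i)"
proof (induction i)
  case 0
  interpret semiring_hom h by fact
  show ?case
    using assms(2,3) by (simp add: twisted_comm_def mat_hom_one)
next
  case (Suc i)
  then show ?case
    using twisted_comm_mult[OF assms(1,2) pow_carrier_mat[OF assms(3)] assms(3)] assms(4) by simp
qed

lemma twisted_comm_conj_fixed:
  assumes "semiring_hom h" "S \<in> carrier_mat n n" "W \<in> carrier_mat n n" "P \<in> carrier_mat n n"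
    and "P * W = 1\<^sub>m n" "W * P = 1\<^sub>m n" "map_mat h W = S * W"
    and "X \<in> carrier_mat n n" "twisted_comm h S X"
  shows "map_mat h (P * X * W) = P * X * W"
proof -
  interpret semiring_hom h by fact
  have hP: "map_mat h P \<in> carrier_mat n n" and hX: "map_mat h X \<in> carrier_mat n n"
    using assms(4,8) by auto
  have "map_mat h P * (S * W) = 1\<^sub>m n"
    using mat_hom_mult[OF assms(4,3)] assms(5,7) by (simp add: mat_hom_one)
  have hP_S: "map_mat h P * S = P"
  proof -
    have "map_mat h P * S = (map_mat h P * S) * (W * P)"
      using assms(2,6) hP by simp
    also have "\<dots> = (map_mat h P * (S * W)) * P"
      using assms(2-4) hP by (simp add: assoc_mult_mat[of _ n n _ n _ n])
    also have "\<dots> = P"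
      using \<open>map_mat h P * (S * W) = 1\<^sub>m n\<close> assms(4) by simp
    finally show ?thesis .
  qed
  have "map_mat h (P * X * W) = map_mat h P * (map_mat h X * S) * W"
    using assms(2-4,7,8) hP hX
    by (simp add: mat_hom_mult[of _ n n _ n] assoc_mult_mat[of _ n n _ n _ n])
  also have "\<dots> = map_mat h P * S * X * W"
    using assms(2,8,9) hP by (simp add: twisted_comm_def assoc_mult_mat[of _ n n _ n _ n])
  also have "\<dots> = P * X * W"
    using hP_S by simp
  finally show ?thesis .
qed

lemma rep_a_carrier [simp]: "rep_a m n k z \<in> carrier_mat n n"
  by (simp add: rep_a_def)

lemma rep_b_carrier [simp]: "rep_b n \<in> carrier_mat n n"
  by (simp add: rep_b_def)

lemma diag_twisted_comm:
  assumes "h 0 = 0" "\<And>i. i < n \<Longrightarrow> h (d i) = d ((i + r) mod n)"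
  shows "twisted_comm h (shift_mat n r) (mat n n (\<lambda>(i,j). if i = j then d j else 0))"
proof -
  let ?D = "mat n n (\<lambda>(i,j). if i = j then d j else 0)"
  let ?S = "shift_mat n r :: 'a mat"
  have "(map_mat h ?D * ?S) $$ (i, j) = (?S * ?D) $$ (i, j)" if ij: "i < n" "j < n" for i j
  proof -
    have "(map_mat h ?D * ?S) $$ (i, j) = (\<Sum>l\<in>{0..<n}. h (if i = l then d l else 0) * ?S $$ (l, j))"
      using ij by (simp add: scalar_prod_def)
    also have "\<dots> = (\<Sum>l\<in>{0..<n}. if l = i then h (d i) * ?S $$ (l, j) else 0)"
      using assms(1) by (intro sum.cong) auto
    also have "\<dots> = (if j = (i + r) mod n then d ((i + r) mod n) else 0)"
      using ij assms(2) by (simp add: shift_mat_def)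
    also have "\<dots> = (?S * ?D) $$ (i, j)"
      using ij by (simp add: shift_mat_mult_index[of _ n n] del: index_mult_mat)
    finally show ?thesis .
  qed
  then show ?thesis
    unfolding twisted_comm_def by (intro eq_matI) auto
qed

(* rho^G(b) is a shift with 0/1 entries, hence h-fixed and commuting with every shift. *)
lemma rep_b_twisted_comm:
  assumes "semiring_hom h" "n > 0"
  shows "twisted_comm h (shift_mat n r) (rep_b n)"
proof -
  interpret semiring_hom h by fact
  have "map_mat h (rep_b n) = rep_b n"
    by (rule eq_matI) (auto simp: rep_b_def)
  then show ?thesis
    unfolding twisted_comm_def rep_b_eq_shift_mat[OF assms(2)] by (simp add: shift_mat_commute)
qed

lemma vandermonde_hom_shift:
  assumes "semiring_hom h" "\<And>i. i < n \<Longrightarrow> h (x i) = x ((i + r) mod n)"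
  shows "map_mat h (vandermonde n x) = shift_mat n r * vandermonde n x"
proof -
  interpret semiring_hom h by fact
  show ?thesis
  proof (rule eq_matI)
    fix i j assume "i < dim_row (shift_mat n r * vandermonde n x)" "j < dim_col (shift_mat n r * vandermonde n x)"
    then have ij: "i < n" "j < n" by auto
    have "(shift_mat n r * vandermonde n x) $$ (i, j) = x ((i + r) mod n) ^ j"
      using ij by (simp add: shift_mat_mult_index[of _ n n] vandermonde_def del: index_mult_mat)
    then show "map_mat h (vandermonde n x) $$ (i, j) = (shift_mat n r * vandermonde n x) $$ (i, j)"
      using ij assms(2) by (simp add: vandermonde_def hom_power)
  qed auto
qed

lemma rep_twisted_comm:
  fixes z :: "'a::field"
  assumes "semiring_hom h" "n > 0"
    and "\<And>i. i < n \<Longrightarrow> h (zpow m z (k ^ i)) = zpow m z (k ^ ((i + r) mod n))"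
  shows "twisted_comm h (shift_mat n r) (rep_a m n k z ^\<^sub>m i * rep_b n ^\<^sub>m j)"
proof -
  interpret semiring_hom h by fact
  have "twisted_comm h (shift_mat n r) (rep_a m n k z)"
    unfolding rep_a_def using assms(3) by (intro diag_twisted_comm) simp_all
  moreover have "twisted_comm h (shift_mat n r) (rep_b n)"
    by (rule rep_b_twisted_comm[OF assms(1,2)])
  ultimately show ?thesis
    using twisted_comm_pow[OF assms(1) shift_mat_carrier rep_a_carrier]
      twisted_comm_pow[OF assms(1) shift_mat_carrier rep_b_carrier]
    by (intro twisted_comm_mult[OF assms(1) shift_mat_carrier]) auto
qed

theorem lemma2p4:
  fixes m n s q :: nat and k :: int and \<zeta> :: "'a::field"
  assumes "m \<ge> 1" and "n \<ge> 1" and "mult_ord m k = n"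
    and "alg_closed TYPE('a)" and "algebraic_over_prime TYPE('a)"
    and "prime s" and "odd s" and "CHAR('a) = s" and "coprime s m"
    and "prim_root m \<zeta>"
    and "\<exists>e \<ge> 1. q = s ^ e"
    and "\<forall>x \<in> {zpow m \<zeta> (k ^ i) | i. i < n}. x ^ q \<in> {zpow m \<zeta> (k ^ i) | i. i < n}"
    and "\<forall>x \<in> {zpow m \<zeta> (k ^ i) | i. i < n}. \<forall>y \<in> {zpow m \<zeta> (k ^ i) | i. i < n}.
            \<exists>t. x ^ (q ^ t) = y"
  shows "\<exists>P Q. P \<in> carrier_mat n n \<and> Q \<in> carrier_mat n n \<and>
           P * Q = 1\<^sub>m n \<and> Q * P = 1\<^sub>m n \<and>
           (\<forall>i j. entries_in_Fq q (P * ((rep_a m n k \<zeta>) ^\<^sub>m i * (rep_b n) ^\<^sub>m j) * Q))"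
proof -
  have m: "m > 0" and n: "n > 0"
    using assms(1,2) by auto
  obtain e where q: "q = CHAR('a) ^ e"
    using assms(8,11) by auto
  have frob: "semiring_hom (\<lambda>y::'a. y ^ q)"
    unfolding q by (rule frobenius_semiring_hom) (simp add: assms(6,8))
  obtain r where shift: "\<And>i. zpow m \<zeta> (k ^ i) ^ q = zpow m \<zeta> (k ^ ((i + r) mod n))"
    using orbit_invariant_imp_shift[OF assms(10) m assms(3) n assms(12)] by blast
  define x where "x i = zpow m \<zeta> (k ^ i)" for i
  obtain P where P: "P \<in> carrier_mat n n" "P * vandermonde n x = 1\<^sub>m n" "vandermonde n x * P = 1\<^sub>m n"
    using vandermonde_invertible orbit_inj[OF assms(10) m assms(3) n] unfolding x_def by metis
  have vandermonde_shift: "map_mat (\<lambda>y. y ^ q) (vandermonde n x) = shift_mat n r * vandermonde n x"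
    by (rule vandermonde_hom_shift[OF frob]) (simp add: x_def shift)
  have twisted: "twisted_comm (\<lambda>y. y ^ q) (shift_mat n r) (rep_a m n k \<zeta> ^\<^sub>m i * rep_b n ^\<^sub>m j)" for i j
    using shift by (intro rep_twisted_comm[OF frob n]) simp
  show ?thesis
  proof (intro exI conjI allI)
    show "entries_in_Fq q (P * (rep_a m n k \<zeta> ^\<^sub>m i * rep_b n ^\<^sub>m j) * vandermonde n x)" for i j
      unfolding entries_in_Fq_iff_fixed
      by (rule twisted_comm_conj_fixed[OF frob shift_mat_carrier vandermonde_carrier P vandermonde_shift _ twisted])
        (rule mult_carrier_mat[OF pow_carrier_mat[OF rep_a_carrier] pow_carrier_mat[OF rep_b_carrier]])
  qed (use P in auto)
qed

end
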